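(* Let $q\ge1$, $\theta\in\mathbb R$, $n\in\{1,\dots,N\}$, and define on $I_n=(t_{n-1},t_n)$ the linear function $\varphi_n(t)=\theta-\lambda_n(t-t_{n-1})$ with $\lambda_n=\zeta_q/\tau_n$ and $\zeta_q=\frac{1}{4(2q+1)}$. Then for every $w\in\mathcal W_{h,\tau}^{p,q-1}$ and every $K\in\mathcal T_h$, $$\|(\mathrm{Id}-\Pi_{q-1}^t)(\varphi_nw)\|_{L^2(K\times I_n)}\le\zeta_q\|w\|_{L^2(K\times I_n)},$$ $$\|(\mathrm{Id}-\Pi_{q-1}^t)(\varphi_nw)(\cdot,t_{n-1}^+)\|_{L^2(\Omega)}\le\frac{1}{4\sqrt{2q+1}\sqrt{\tau_n}}\|w\|_{L^2(\Omega\times I_n)}=\frac{\sqrt{\lambda_n}}{2}\|w\|_{L^2(\Omega\times I_n)}.$$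
   Context: $\Omega\subset\mathbb R^d$ bounded polytopic; $\mathcal T_h$ a simplicial mesh of $\Omega$; $0=t_0<\dots<t_N=T$ a partition of $(0,T)$ with $I_n=(t_{n-1},t_n)$, $\tau_n=t_n-t_{n-1}$. $\mathcal V_h^p=\{v\in H^1_0(\Omega):v|_K\in\mathbb P^p(K)\ \forall K\}$ and $\mathcal W_{h,\tau}^{p,q-1}=\{w\in L^2(0,T;H^1_0(\Omega)):w|_{\Omega\times I_n}\in\mathbb P^{q-1}(I_n;\mathcal V_h^p)\ \forall n\}$. $\Pi_{q-1}^t$ denotes the $L^2$-orthogonal projection (in time) onto polynomials of degree at most $q-1$ on each interval $I_n$, applied pointwise in space; here it is applied to $\varphi_n w$ restricted to $\Omega\times I_n$. *)

theory Defs
  imports "HOL-Analysis.Analysis" "HOL-Computational_Algebra.Polynomial"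
begin

definition mpoly_fun :: "nat \<Rightarrow> (real^'d \<Rightarrow> real) \<Rightarrow> bool" where
  "mpoly_fun p f \<longleftrightarrow> (\<exists>c :: ('d \<Rightarrow> nat) \<Rightarrow> real.
      \<forall>x. f x = (\<Sum>\<alpha>\<in>{\<alpha>. sum \<alpha> UNIV \<le> p}. c \<alpha> * (\<Prod>i\<in>UNIV. (x $ i) ^ (\<alpha> i))))"

definition simplicial_mesh :: "(real^'d) set \<Rightarrow> (real^'d) set set \<Rightarrow> bool" where
  "simplicial_mesh \<Omega> Th \<longleftrightarrow> open \<Omega> \<and> bounded \<Omega> \<and> finite Th \<and>
     (\<forall>K\<in>Th. int CARD('d) simplex K) \<and> \<Union>Th = closure \<Omega> \<and>
     (\<forall>K\<in>Th. \<forall>K'\<in>Th. K \<noteq> K' \<longrightarrow>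
        interior K \<inter> interior K' = {} \<and> (K \<inter> K') face_of K \<and> (K \<inter> K') face_of K')"

text \<open>The Lagrange space V_h^p: H^1_0 functions that are piecewise P^p on the mesh;
  for piecewise polynomials on a conforming mesh, membership in H^1_0 means
  continuity on the closure and vanishing on the boundary.\<close>
definition Vh :: "(real^'d) set \<Rightarrow> (real^'d) set set \<Rightarrow> nat \<Rightarrow> (real^'d \<Rightarrow> real) set" where
  "Vh \<Omega> Th p = {v. continuous_on (closure \<Omega>) v \<and> (\<forall>x\<in>frontier \<Omega>. v x = 0) \<and>
      (\<forall>K\<in>Th. \<exists>f. mpoly_fun p f \<and> (\<forall>x\<in>K. v x = f x))}"

definition Wh :: "(real^'d) set \<Rightarrow> (real^'d) set set \<Rightarrow> nat \<Rightarrow> nat \<Rightarrow> (nat \<Rightarrow> real) \<Rightarrow> nat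
    \<Rightarrow> (real^'d \<Rightarrow> real \<Rightarrow> real) set" where
  "Wh \<Omega> Th p q t N = {w. \<forall>m\<in>{1..N}. \<exists>V :: nat \<Rightarrow> real^'d \<Rightarrow> real.
      (\<forall>j<q. V j \<in> Vh \<Omega> Th p) \<and>
      (\<forall>x. \<forall>s\<in>{t (m - 1)<..<t m}. w x s = (\<Sum>j<q. V j x * s ^ j))}"

definition proj_t :: "real \<Rightarrow> real \<Rightarrow> nat \<Rightarrow> (real \<Rightarrow> real) \<Rightarrow> real poly" where
  "proj_t a b q g = (THE P. degree P \<le> q - 1 \<and>
      (\<forall>j\<le>q - 1. integral {a<..<b} (\<lambda>s. (g s - poly P s) * s ^ j) = 0))"

end

theory Submission
  imports Defs
begin

(* For fixed x, t \<mapsto> w(x, t) is a polynomial g of degree < q on I_n and the weight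
   \<phi>_n is affine with slope -\<lambda>_n. Since the projection is the best L^2 approximation, the residual
   of \<phi>_n g is at most that of \<phi>_n g - \<phi>_n(m) g = -\<lambda>_n (t - m) g, m the midpoint, which gives the
   factor \<lambda>_n \<tau>_n / 2 = \<zeta>_q / 2. The residual R has degree \<le> q and is orthogonal to degree < q;
   integrating ((t - t_n) R^2)' and using that (t - t_n) R' - q R has degree < q gives the exact
   trace identity \<tau>_n R(t_{n-1})^2 = (2q + 1) \<parallel>R\<parallel>^2, whence the trace bound. The spatial
   coefficients of w are continuous on the closure of \<Omega>, and the projection is linear, so both
   integrands extend continuously to the compact cylinder and Fubini integrates the pointwise
   bounds over K or \<Omega>. *)

section \<open>Iterated integrals over cylinders\<close>

lemma integral_nonneg_unconditional:
  fixes f :: "'a::euclidean_space \<Rightarrow> real"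
  assumes "\<And>x. x \<in> S \<Longrightarrow> 0 \<le> f x"
  shows "0 \<le> integral S f"
  using assms by (cases "f integrable_on S") (auto intro: integral_nonneg simp: not_integrable_integral)

lemma set_integrable_continuous_on_compact:
  fixes f :: "'a::euclidean_space \<Rightarrow> real"
  assumes "compact C" "continuous_on C f" "S \<subseteq> C" "S \<in> sets borel"
  shows "set_integrable lborel S f"
  using set_integrable_subset[of lborel C f S] assms borel_integrable_compact[OF assms(1,2)]
  by (simp add: set_integrable_def)

lemma
  fixes f :: "'a::euclidean_space \<times> real \<Rightarrow> real"
  assumes C: "compact C" "S \<subseteq> C" "S \<in> sets borel" and f: "continuous_on (C \<times> {a..b}) f"
  shows integrable_on_Ioo_slices: "(\<lambda>x. integral {a<..<b} (\<lambda>s. f (x, s))) integrable_on S"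
    and integral_Times_Ioo: "integral (S \<times> {a<..<b}) f = integral S (\<lambda>x. integral {a<..<b} (\<lambda>s. f (x, s)))"
proof -
  define G where "G x = integral {a<..<b} (\<lambda>s. f (x, s))" for x
  define H where "H = (\<lambda>z. indicator (S \<times> {a<..<b}) z *\<^sub>R f z)"
  have f_int: "set_integrable lborel (S \<times> {a<..<b}) f"
    using C f by (intro set_integrable_continuous_on_compact[of "C \<times> {a..b}"])
      (auto intro: compact_Times borel_Times)
  then have H: "integrable (lborel \<Otimes>\<^sub>M lborel) H"
    by (simp add: H_def set_integrable_def lborel_prod)
  have slice: "(\<integral>s. H (x, s) \<partial>lborel) = indicator S x *\<^sub>R G x" for x
  proof (cases "x \<in> S")
    case True
    have "continuous_on {a..b} (\<lambda>s. f (x, s))"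
      using True C(2) by (intro continuous_on_compose2[OF f]) (auto intro!: continuous_intros)
    then have "set_integrable lborel {a<..<b} (\<lambda>s. f (x, s))"
      by (intro set_integrable_continuous_on_compact[of "{a..b}"]) auto
    then show ?thesis
      using True by (simp add: H_def G_def set_borel_integral_eq_integral(2)[symmetric]
          set_lebesgue_integral_def indicator_def)
  qed (simp add: H_def indicator_def)
  have "integrable lborel (\<lambda>x. indicator S x *\<^sub>R G x)"
    using lborel_pair.integrable_fst'[OF H] by (simp add: slice)
  then have G: "set_integrable lborel S G"
    by (simp add: set_integrable_def)
  then show "G integrable_on S"
    by (rule set_borel_integral_eq_integral)
  have "integral (S \<times> {a<..<b}) f = integral\<^sup>L (lborel \<Otimes>\<^sub>M lborel) H"
    using f_int by (simp add: set_borel_integral_eq_integral(2)[symmetric] set_lebesgue_integral_def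
        H_def lborel_prod)
  also have "\<dots> = (\<integral>x. indicator S x *\<^sub>R G x \<partial>lborel)"
    using lborel_pair.integral_fst'[OF H] by (simp add: slice)
  also have "\<dots> = integral S G"
    using set_borel_integral_eq_integral(2)[OF G] by (simp add: set_lebesgue_integral_def)
  finally show "integral (S \<times> {a<..<b}) f = integral S G" .
qed

lemma integral_Times_Ioo_mono_slices:
  fixes f g :: "'a::euclidean_space \<times> real \<Rightarrow> real"
  assumes C: "compact C" "S \<subseteq> C" "S \<in> sets borel"
    and f: "continuous_on (C \<times> {a..b}) f" and g: "continuous_on (C \<times> {a..b}) g"
    and slices: "\<And>x. x \<in> S \<Longrightarrow> integral {a<..<b} (\<lambda>s. f (x, s)) \<le> integral {a<..<b} (\<lambda>s. g (x, s))"
  shows "integral (S \<times> {a<..<b}) f \<le> integral (S \<times> {a<..<b}) g"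
  unfolding integral_Times_Ioo[OF C f] integral_Times_Ioo[OF C g]
  using integrable_on_Ioo_slices[OF C f] integrable_on_Ioo_slices[OF C g] slices
  by (rule integral_le)

lemma integral_le_integral_Times_Ioo_slices:
  fixes e :: "'a::euclidean_space \<Rightarrow> real" and g :: "'a \<times> real \<Rightarrow> real"
  assumes C: "compact C" "S \<subseteq> C" "S \<in> sets borel"
    and e: "continuous_on C e" and g: "continuous_on (C \<times> {a..b}) g"
    and slices: "\<And>x. x \<in> S \<Longrightarrow> e x \<le> integral {a<..<b} (\<lambda>s. g (x, s))"
  shows "integral S e \<le> integral (S \<times> {a<..<b}) g"
proof -
  have "e integrable_on S"
    using set_integrable_continuous_on_compact[OF C(1) e C(2,3)]
    by (rule set_borel_integral_eq_integral)
  then show ?thesis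
    unfolding integral_Times_Ioo[OF C g]
    using integrable_on_Ioo_slices[OF C g] slices by (rule integral_le)
qed

lemma continuous_on_poly_sum_smult:
  fixes c :: "'j \<Rightarrow> 'a::topological_space \<Rightarrow> real"
  assumes "\<And>j. j \<in> J \<Longrightarrow> continuous_on C (c j)"
  shows "continuous_on (C \<times> T) (\<lambda>z. poly (\<Sum>j\<in>J. smult (c j (fst z)) (P j)) (snd z))"
proof -
  have "continuous_on (C \<times> T) (\<lambda>z. c j (fst z))" if "j \<in> J" for j
    using assms[OF that] by (rule continuous_on_compose2) (auto intro: continuous_intros)
  then show ?thesis
    by (simp add: poly_sum) (intro continuous_intros)
qed

lemma Lim_at_right_eq:
  fixes f F :: "real \<Rightarrow> real"
  assumes "a < b" "isCont F a" "\<And>s. s \<in> {a<..<b} \<Longrightarrow> f s = F s"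
  shows "Lim (at_right a) f = F a"
proof (rule tendsto_Lim[OF trivial_limit_at_right_real])
  have "eventually (\<lambda>s. F s = f s) (at_right a)"
    using assms(1,3) by (intro eventually_at_rightI[of a b]) auto
  moreover have "(F \<longlongrightarrow> F a) (at_right a)"
    using assms(2) by (simp add: isCont_def filterlim_at_split)
  ultimately show "(f \<longlongrightarrow> F a) (at_right a)"
    by (rule Lim_transform_eventually[rotated])
qed

section \<open>Orthogonal projection onto polynomials on an interval\<close>

locale real_interval =
  fixes a b :: real
  assumes a_less_b: "a < b"
begin

definition pint :: "real poly \<Rightarrow> real" where
  "pint p = integral {a..b} (poly p)"

lemma poly_integrable_on: "poly p integrable_on {a..b}"
  by (intro integrable_continuous_real continuous_intros)

lemma pint_add: "pint (p + q) = pint p + pint q"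
  by (simp add: pint_def poly_add[abs_def] integral_add poly_integrable_on)

lemma pint_diff: "pint (p - q) = pint p - pint q"
  by (simp add: pint_def poly_diff[abs_def] integral_diff poly_integrable_on)

lemma pint_smult: "pint (smult c p) = c * pint p"
  by (simp add: pint_def poly_smult[abs_def])

lemma pint_0: "pint 0 = 0"
  by (simp add: pint_def poly_0[abs_def])

lemma pint_sum: "pint (\<Sum>i\<in>A. f i) = (\<Sum>i\<in>A. pint (f i))"
  by (induction A rule: infinite_finite_induct) (auto simp: pint_add pint_0)

lemma pint_pderiv: "pint (pderiv p) = poly p b - poly p a"
proof -
  have "(poly (pderiv p) has_integral poly p b - poly p a) {a..b}"
  proof (rule fundamental_theorem_of_calculus)
    show "a \<le> b"
      using a_less_b by simp
  qed (metis has_real_derivative_iff_has_vector_derivative has_field_derivative_at_within poly_DERIV)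
  then show ?thesis
    unfolding pint_def by (rule integral_unique)
qed

lemma pint_mono: "(\<And>x. x \<in> {a..b} \<Longrightarrow> poly p x \<le> poly q x) \<Longrightarrow> pint p \<le> pint q"
  unfolding pint_def by (intro integral_le poly_integrable_on) auto

lemma pint_square_nonneg: "0 \<le> pint (p * p)"
  unfolding pint_def by (intro integral_nonneg poly_integrable_on) auto

lemma pint_square_pos:
  assumes "p \<noteq> 0"
  shows "0 < pint (p * p)"
proof (rule ccontr)
  assume "\<not> 0 < pint (p * p)"
  then have "integral {a..b} (poly (p * p)) = 0"
    using pint_square_nonneg[of p] unfolding pint_def by linarith
  then have "\<forall>x\<in>{a..b}. poly (p * p) x = 0"
    by (subst (asm) integral_eq_0_iff) (auto intro!: continuous_intros simp: a_less_b)
  then have "{a..b} \<subseteq> {x. poly p x = 0}"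
    by auto
  moreover have "finite {x. poly p x = 0}"
    using assms by (rule poly_roots_finite)
  moreover have "infinite {a..b}"
    using a_less_b by simp
  ultimately show False
    using finite_subset by blast
qed

definition deg_lt :: "nat \<Rightarrow> real poly \<Rightarrow> bool" where
  "deg_lt k P \<longleftrightarrow> (\<forall>i\<ge>k. coeff P i = 0)"

definition orth :: "nat \<Rightarrow> real poly \<Rightarrow> bool" where
  "orth k R \<longleftrightarrow> (\<forall>j<k. pint (R * monom 1 j) = 0)"

lemma deg_lt_0: "deg_lt k 0"
  and deg_lt_add: "deg_lt k P \<Longrightarrow> deg_lt k Q \<Longrightarrow> deg_lt k (P + Q)"
  and deg_lt_diff: "deg_lt k P \<Longrightarrow> deg_lt k Q \<Longrightarrow> deg_lt k (P - Q)"
  and deg_lt_smult: "deg_lt k P \<Longrightarrow> deg_lt k (smult c P)"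
  and deg_lt_monom: "j < k \<Longrightarrow> deg_lt k (monom c j)"
  and deg_lt_mono: "deg_lt k P \<Longrightarrow> k \<le> l \<Longrightarrow> deg_lt l P"
  by (simp_all add: deg_lt_def coeff_monom)

lemma deg_lt_mult_linear: "deg_lt k P \<Longrightarrow> deg_lt (Suc k) ([:c, d:] * P)"
  by (auto simp: deg_lt_def coeff_pCons split: nat.split)

lemma deg_lt_sum: "(\<And>i. i \<in> A \<Longrightarrow> deg_lt k (f i)) \<Longrightarrow> deg_lt k (\<Sum>i\<in>A. f i)"
  by (induction A rule: infinite_finite_induct) (auto simp: deg_lt_0 deg_lt_add)

lemma deg_lt_iff_degree: "1 \<le> k \<Longrightarrow> deg_lt k P \<longleftrightarrow> degree P \<le> k - 1"
proof
  assume "1 \<le> k" "deg_lt k P"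
  show "degree P \<le> k - 1"
  proof (rule ccontr)
    assume "\<not> degree P \<le> k - 1"
    then have "k \<le> degree P"
      using \<open>1 \<le> k\<close> by simp
    then have "P = 0"
      using \<open>deg_lt k P\<close> leading_coeff_0_iff unfolding deg_lt_def by blast
    then show False
      using \<open>k \<le> degree P\<close> \<open>1 \<le> k\<close> by simp
  qed
qed (auto simp: deg_lt_def coeff_eq_0)

lemma orth_0: "orth k 0"
  and orth_add: "orth k P \<Longrightarrow> orth k Q \<Longrightarrow> orth k (P + Q)"
  and orth_diff: "orth k P \<Longrightarrow> orth k Q \<Longrightarrow> orth k (P - Q)"
  and orth_smult: "orth k P \<Longrightarrow> orth k (smult c P)"
  by (simp_all add: orth_def distrib_right left_diff_distrib pint_0 pint_add pint_diff pint_smult)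

lemma orth_sum: "(\<And>i. i \<in> A \<Longrightarrow> orth k (f i)) \<Longrightarrow> orth k (\<Sum>i\<in>A. f i)"
  by (induction A rule: infinite_finite_induct) (auto simp: orth_0 orth_add)

lemma orth_deg_lt:
  assumes "orth k R" "deg_lt k P"
  shows "pint (R * P) = 0"
proof -
  define c where "c = coeff P"
  have "P = (\<Sum>i<k. monom (c i) i)"
    using assms(2) by (subst poly_eq_iff) (auto simp: c_def deg_lt_def coeff_sum coeff_monom)
  also have "\<dots> = (\<Sum>i<k. smult (c i) (monom 1 i))"
    by (simp add: smult_monom)
  finally have "R * P = (\<Sum>i<k. smult (c i) (R * monom 1 i))"
    by (simp add: sum_distrib_left)
  then have "pint (R * P) = (\<Sum>i<k. c i * pint (R * monom 1 i))"
    by (simp add: pint_sum pint_smult)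
  also have "\<dots> = 0"
    using assms(1) by (simp add: orth_def)
  finally show ?thesis .
qed

lemma proj_exists: "\<exists>P. deg_lt k P \<and> orth k (F - P)"
proof (induction k arbitrary: F)
  case 0
  show ?case
    by (auto simp: deg_lt_def orth_def intro: exI[of _ 0])
next
  case (Suc k)
  obtain PF where PF: "deg_lt k PF" "orth k (F - PF)"
    using Suc by blast
  obtain Pk where Pk: "deg_lt k Pk" "orth k (monom 1 k - Pk)"
    using Suc by blast
  \<comment> \<open>Gram--Schmidt step: correct PF by a multiple of the part of X^k orthogonal to degree < k.\<close>
  define Q where "Q = monom 1 k - Pk"
  have "coeff Q k = 1"
    using Pk(1) by (simp add: Q_def deg_lt_def)
  then have "0 < pint (Q * Q)"
    by (intro pint_square_pos) auto
  moreover have "pint (Q * Q) = pint (Q * monom 1 k)"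
    using orth_deg_lt[OF Pk(2)[folded Q_def] Pk(1)]
    by (simp add: Q_def right_diff_distrib pint_diff)
  ultimately have Qk: "pint (Q * monom 1 k) \<noteq> 0"
    by simp
  define c where "c = pint ((F - PF) * monom 1 k) / pint (Q * monom 1 k)"
  define P where "P = PF + smult c Q"
  have "deg_lt (Suc k) P"
    unfolding P_def Q_def using PF(1) Pk(1)
    by (intro deg_lt_add deg_lt_smult deg_lt_diff deg_lt_monom) (auto intro: deg_lt_mono)
  moreover have "orth (Suc k) (F - P)"
    unfolding orth_def
  proof (intro allI impI)
    fix j
    assume "j < Suc k"
    have "(F - P) * monom 1 j = (F - PF) * monom 1 j - smult c (Q * monom 1 j)"
      by (simp add: P_def algebra_simps)
    moreover have "pint (Q * monom 1 j) = 0" "pint ((F - PF) * monom 1 j) = 0" if "j < k"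
      using that PF(2) Pk(2) by (simp_all add: orth_def Q_def)
    ultimately show "pint ((F - P) * monom 1 j) = 0"
      using \<open>j < Suc k\<close> Qk by (cases "j < k") (auto simp: pint_diff pint_smult c_def less_Suc_eq)
  qed
  ultimately show ?case
    by blast
qed

lemma proj_unique:
  assumes "deg_lt k P1" "orth k (F - P1)" "deg_lt k P2" "orth k (F - P2)"
  shows "P1 = P2"
proof (rule ccontr)
  assume "P1 \<noteq> P2"
  then have "0 < pint ((P1 - P2) * (P1 - P2))"
    by (intro pint_square_pos) simp
  moreover have "orth k (P1 - P2)"
    using orth_diff[OF assms(4) assms(2)] by simp
  then have "pint ((P1 - P2) * (P1 - P2)) = 0"
    using assms by (intro orth_deg_lt deg_lt_diff)
  ultimately show False
    by simp
qed

definition proj :: "nat \<Rightarrow> real poly \<Rightarrow> real poly" where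
  "proj k F = (THE P. deg_lt k P \<and> orth k (F - P))"

lemma deg_lt_proj: "deg_lt k (proj k F)"
  and orth_proj: "orth k (F - proj k F)"
proof -
  have "\<exists>!P. deg_lt k P \<and> orth k (F - P)"
    using proj_exists proj_unique by blast
  then have "deg_lt k (proj k F) \<and> orth k (F - proj k F)"
    unfolding proj_def by (rule theI')
  then show "deg_lt k (proj k F)" "orth k (F - proj k F)"
    by auto
qed

lemma proj_eqI: "deg_lt k P \<Longrightarrow> orth k (F - P) \<Longrightarrow> proj k F = P"
  using proj_unique deg_lt_proj orth_proj by blast

lemma proj_sum_smult: "proj k (\<Sum>j\<in>J. smult (c j) (F j)) = (\<Sum>j\<in>J. smult (c j) (proj k (F j)))"
proof (rule proj_eqI)
  show "deg_lt k (\<Sum>j\<in>J. smult (c j) (proj k (F j)))"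
    by (intro deg_lt_sum deg_lt_smult deg_lt_proj)
  have "orth k (\<Sum>j\<in>J. smult (c j) (F j - proj k (F j)))"
    by (intro orth_sum orth_smult orth_proj)
  then show "orth k ((\<Sum>j\<in>J. smult (c j) (F j)) - (\<Sum>j\<in>J. smult (c j) (proj k (F j))))"
    by (simp add: smult_diff_right sum_subtractf)
qed

lemma proj_best_approximation:
  assumes "deg_lt k H"
  shows "pint ((F - proj k F) * (F - proj k F)) \<le> pint ((F - H) * (F - H))"
proof -
  define R where "R = F - proj k F"
  define E where "E = proj k F - H"
  have "(F - H) * (F - H) = R * R + (R * E + R * E) + E * E"
    by (simp add: R_def E_def algebra_simps)
  then have "pint ((F - H) * (F - H)) = pint (R * R) + (pint (R * E) + pint (R * E)) + pint (E * E)"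
    by (simp only: pint_add)
  moreover have "pint (R * E) = 0"
    unfolding R_def E_def using orth_proj deg_lt_proj assms by (intro orth_deg_lt deg_lt_diff)
  ultimately show ?thesis
    using pint_square_nonneg[of E] by (simp add: R_def)
qed

lemma orth_endpoint_identity:
  assumes "orth q R" "deg_lt (Suc q) R"
  shows "(b - a) * (poly R a)\<^sup>2 = (2 * real q + 1) * pint (R * R)"
proof -
  \<comment> \<open>With D = X - b, the polynomial D R' - q R has degree < q, so it is orthogonal to R;
    integrating (D R^2)' = R^2 + 2 R (D R') over [a, b] gives the identity.\<close>
  define D where "D = [:-b, 1:]"
  define T where "T = D * pderiv R - smult (real q) R"
  have "deg_lt q T"
    unfolding deg_lt_def
  proof (intro allI impI)
    fix i
    assume "q \<le> i"
    have R0: "coeff R j = 0" if "q < j" for j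
      using assms(2) that by (simp add: deg_lt_def)
    have "coeff T i = real i * coeff R i - real q * coeff R i"
      using R0[of "Suc i"] \<open>q \<le> i\<close>
      by (cases i) (simp_all add: T_def D_def coeff_pderiv algebra_simps)
    also have "\<dots> = 0"
      using R0[of i] \<open>q \<le> i\<close> by (cases "i = q") auto
    finally show "coeff T i = 0" .
  qed
  then have T0: "pint (R * T) = 0"
    by (rule orth_deg_lt[OF assms(1)])
  have "pderiv D = 1"
    by (simp add: D_def pderiv_pCons)
  then have "pderiv (D * (R * R)) = R * R + (R * (D * pderiv R) + R * (D * pderiv R))"
    by (simp add: pderiv_mult algebra_simps)
  also have "D * pderiv R = T + smult (real q) R"
    by (simp add: T_def)
  finally have pderiv_DRR: "pderiv (D * (R * R))
      = R * R + (R * T + R * T) + (smult (real q) (R * R) + smult (real q) (R * R))"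
    by (simp add: algebra_simps)
  have "pint (pderiv (D * (R * R))) = (2 * real q + 1) * pint (R * R)"
    unfolding pderiv_DRR pint_add pint_smult T0 by (simp add: algebra_simps)
  moreover have "pint (pderiv (D * (R * R))) = (b - a) * (poly R a)\<^sup>2"
    by (simp add: pint_pderiv D_def power2_eq_square algebra_simps)
  ultimately show ?thesis
    by simp
qed

lemma proj_residual_linear_weight:
  fixes c lam :: real
  assumes "deg_lt q g"
  defines "R \<equiv> [:c, -lam:] * g - proj q ([:c, -lam:] * g)"
  shows "pint (R * R) \<le> (lam * (b - a))\<^sup>2 / 4 * pint (g * g)"
proof -
  \<comment> \<open>Compare with the multiple of g by the value of the weight at the midpoint m.\<close>
  define m where "m = (a + b) / 2"
  define H where "H = smult (c - lam * m) g"
  have "pint (R * R) \<le> pint (([:c, -lam:] * g - H) * ([:c, -lam:] * g - H))"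
    unfolding R_def H_def using assms(1) by (intro proj_best_approximation deg_lt_smult)
  also have "\<dots> = lam\<^sup>2 * pint (([:-m, 1:] * g) * ([:-m, 1:] * g))"
  proof -
    have "[:c, -lam:] * g - H = smult (- lam) ([:-m, 1:] * g)"
      by (simp add: H_def poly_eq_poly_eq_iff[symmetric] fun_eq_iff algebra_simps)
    then show ?thesis
      by (simp add: pint_smult power2_eq_square)
  qed
  also have "pint (([:-m, 1:] * g) * ([:-m, 1:] * g)) \<le> pint (smult ((b - a)\<^sup>2 / 4) (g * g))"
  proof (rule pint_mono)
    fix x
    assume x: "x \<in> {a..b}"
    then have "(x - m)\<^sup>2 \<le> ((b - a) / 2)\<^sup>2"
      by (intro power2_le_iff_abs_le[THEN iffD2]) (auto simp: m_def abs_if field_simps)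
    then have "(x - m)\<^sup>2 * (poly g x)\<^sup>2 \<le> ((b - a) / 2)\<^sup>2 * (poly g x)\<^sup>2"
      by (intro mult_right_mono) auto
    then show "poly (([:-m, 1:] * g) * ([:-m, 1:] * g)) x \<le> poly (smult ((b - a)\<^sup>2 / 4) (g * g)) x"
      by (simp add: power2_eq_square algebra_simps)
  qed
  finally show ?thesis
    by (simp add: pint_smult power_mult_distrib mult_left_mono)
qed

lemma integral_Ioo_poly:
  assumes "\<And>s. s \<in> {a<..<b} \<Longrightarrow> f s = poly F s"
  shows "integral {a<..<b} f = pint F"
proof -
  have "integral {a<..<b} f = integral {a<..<b} (poly F)"
    using assms by (intro integral_cong) auto
  then show ?thesis
    by (simp add: pint_def integral_open_interval_real)
qed

lemma integral_Ioo_poly_square: "integral {a<..<b} (\<lambda>s. (poly P s)\<^sup>2) = pint (P * P)"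
  by (rule integral_Ioo_poly) (simp add: power2_eq_square)

lemma proj_t_eq_proj:
  assumes "1 \<le> q" and "\<And>s. s \<in> {a<..<b} \<Longrightarrow> f s = poly F s"
  shows "proj_t a b q f = proj q F"
proof -
  have "integral {a<..<b} (\<lambda>s. (f s - poly P s) * s ^ j) = pint ((F - P) * monom 1 j)" for P j
    using assms(2) by (intro integral_Ioo_poly) (simp add: poly_monom)
  then have char: "degree P \<le> q - 1 \<and> (\<forall>j\<le>q - 1. integral {a<..<b} (\<lambda>s. (f s - poly P s) * s ^ j) = 0)
      \<longleftrightarrow> deg_lt q P \<and> orth q (F - P)" for P
    using assms(1) by (auto simp: deg_lt_iff_degree orth_def)
  show ?thesis
    unfolding proj_t_def char
  proof (rule the_equality)
    show "deg_lt q (proj q F) \<and> orth q (F - proj q F)"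
      by (simp add: deg_lt_proj orth_proj)
  qed (auto intro: proj_eqI[symmetric])
qed

end

section \<open>Estimates on one time slab\<close>

locale time_slab = real_interval a b for a b :: real +
  fixes C :: "'a::euclidean_space set" and q :: nat and V :: "nat \<Rightarrow> 'a \<Rightarrow> real"
    and w :: "'a \<Rightarrow> real \<Rightarrow> real" and \<theta> lam :: real
  assumes compact_C: "compact C" and q_pos: "1 \<le> q"
    and V_cont: "\<And>j. j < q \<Longrightarrow> continuous_on C (V j)"
    and w_eq: "\<And>x s. s \<in> {a<..<b} \<Longrightarrow> w x s = (\<Sum>j<q. V j x * s ^ j)"
begin

definition weight :: "real \<Rightarrow> real" where
  "weight s = \<theta> - lam * (s - a)"

definition residual :: "'a \<Rightarrow> real \<Rightarrow> real" where
  "residual x s = weight s * w x s - poly (proj_t a b q (\<lambda>s'. weight s' * w x s')) s"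

definition weight_poly :: "real poly" where
  "weight_poly = [:\<theta> + lam * a, - lam:]"

definition w_poly :: "'a \<Rightarrow> real poly" where
  "w_poly x = (\<Sum>j<q. smult (V j x) (monom 1 j))"

definition residual_poly :: "'a \<Rightarrow> real poly" where
  "residual_poly x = weight_poly * w_poly x - proj q (weight_poly * w_poly x)"

lemma deg_lt_w_poly: "deg_lt q (w_poly x)"
  unfolding w_poly_def by (intro deg_lt_sum deg_lt_smult deg_lt_monom) simp

lemma w_eq_w_poly: "s \<in> {a<..<b} \<Longrightarrow> w x s = poly (w_poly x) s"
  by (simp add: w_eq w_poly_def poly_sum poly_monom)

lemma residual_eq_residual_poly: "s \<in> {a<..<b} \<Longrightarrow> residual x s = poly (residual_poly x) s"
proof -
  have weight: "weight s = poly weight_poly s" for s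
    by (simp add: weight_poly_def weight_def algebra_simps)
  have "proj_t a b q (\<lambda>s'. weight s' * w x s') = proj q (weight_poly * w_poly x)"
    using q_pos by (rule proj_t_eq_proj) (simp add: w_eq_w_poly weight)
  then show "s \<in> {a<..<b} \<Longrightarrow> residual x s = poly (residual_poly x) s"
    by (simp add: residual_def residual_poly_def w_eq_w_poly weight)
qed

lemma residual_poly_sum:
  "residual_poly x
    = (\<Sum>j<q. smult (V j x) (weight_poly * monom 1 j - proj q (weight_poly * monom 1 j)))"
proof -
  have "weight_poly * w_poly x = (\<Sum>j<q. smult (V j x) (weight_poly * monom 1 j))"
    by (simp add: w_poly_def sum_distrib_left)
  then show ?thesis
    by (simp add: residual_poly_def proj_sum_smult smult_diff_right sum_subtractf)
qed

lemma continuous_on_w_poly: "continuous_on (C \<times> T) (\<lambda>z. poly (w_poly (fst z)) (snd z))"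
  unfolding w_poly_def by (rule continuous_on_poly_sum_smult) (simp add: V_cont)

lemma continuous_on_residual_poly:
  "continuous_on (C \<times> T) (\<lambda>z. poly (residual_poly (fst z)) (snd z))"
  unfolding residual_poly_sum by (rule continuous_on_poly_sum_smult) (simp add: V_cont)

lemma Lim_residual: "Lim (at_right a) (residual x) = poly (residual_poly x) a"
  using a_less_b by (rule Lim_at_right_eq) (auto simp: residual_eq_residual_poly)

lemma pint_residual_poly_le:
  "pint (residual_poly x * residual_poly x) \<le> (lam * (b - a))\<^sup>2 / 4 * pint (w_poly x * w_poly x)"
  unfolding residual_poly_def weight_poly_def
  by (rule proj_residual_linear_weight[OF deg_lt_w_poly])

lemma residual_poly_trace_le:
  "(poly (residual_poly x) a)\<^sup>2 \<le> (2 * real q + 1) * lam\<^sup>2 * (b - a) / 4 * pint (w_poly x * w_poly x)"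
proof -
  have "deg_lt (Suc q) (weight_poly * w_poly x)"
    unfolding weight_poly_def by (rule deg_lt_mult_linear[OF deg_lt_w_poly])
  then have "deg_lt (Suc q) (residual_poly x)"
    unfolding residual_poly_def by (intro deg_lt_diff deg_lt_mono[OF deg_lt_proj]) auto
  then have "(b - a) * (poly (residual_poly x) a)\<^sup>2
      = (2 * real q + 1) * pint (residual_poly x * residual_poly x)"
    unfolding residual_poly_def by (intro orth_endpoint_identity orth_proj) (simp add: residual_poly_def)
  also have "\<dots> \<le> (2 * real q + 1) * ((lam * (b - a))\<^sup>2 / 4 * pint (w_poly x * w_poly x))"
    using pint_residual_poly_le by (intro mult_left_mono) auto
  also have "\<dots> = (b - a) * ((2 * real q + 1) * lam\<^sup>2 * (b - a) / 4 * pint (w_poly x * w_poly x))"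
    by (simp add: power2_eq_square algebra_simps)
  finally show ?thesis
    using a_less_b by (simp add: mult_le_cancel_left_pos)
qed

theorem residual_L2_bound:
  assumes S: "S \<subseteq> C" "S \<in> sets borel"
  shows "integral (S \<times> {a<..<b}) (\<lambda>(x, s). (residual x s)\<^sup>2)
    \<le> (lam * (b - a))\<^sup>2 / 4 * integral (S \<times> {a<..<b}) (\<lambda>(x, s). (w x s)\<^sup>2)"
proof -
  define c where "c = (lam * (b - a))\<^sup>2 / 4"
  have "integral (S \<times> {a<..<b}) (\<lambda>(x, s). (residual x s)\<^sup>2)
      = integral (S \<times> {a<..<b}) (\<lambda>z. (poly (residual_poly (fst z)) (snd z))\<^sup>2)"
    by (intro integral_cong) (auto simp: residual_eq_residual_poly)
  also have "\<dots> \<le> integral (S \<times> {a<..<b}) (\<lambda>z. c * (poly (w_poly (fst z)) (snd z))\<^sup>2)"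
  proof (rule integral_Times_Ioo_mono_slices[OF compact_C S])
    show "continuous_on (C \<times> {a..b}) (\<lambda>z. (poly (residual_poly (fst z)) (snd z))\<^sup>2)"
      "continuous_on (C \<times> {a..b}) (\<lambda>z. c * (poly (w_poly (fst z)) (snd z))\<^sup>2)"
      by (intro continuous_intros continuous_on_residual_poly continuous_on_w_poly)+
  qed (use pint_residual_poly_le in \<open>simp add: integral_Ioo_poly_square c_def\<close>)
  also have "\<dots> = c * integral (S \<times> {a<..<b}) (\<lambda>(x, s). (w x s)\<^sup>2)"
    by (subst integral_mult_right[symmetric], intro integral_cong) (auto simp: w_eq_w_poly)
  finally show ?thesis
    by (simp only: c_def)
qed

theorem residual_trace_bound:
  assumes S: "S \<subseteq> C" "S \<in> sets borel"
  shows "integral S (\<lambda>x. (Lim (at_right a) (residual x))\<^sup>2)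
    \<le> (2 * real q + 1) * lam\<^sup>2 * (b - a) / 4 * integral (S \<times> {a<..<b}) (\<lambda>(x, s). (w x s)\<^sup>2)"
proof -
  define c where "c = (2 * real q + 1) * lam\<^sup>2 * (b - a) / 4"
  have "integral S (\<lambda>x. (Lim (at_right a) (residual x))\<^sup>2)
      = integral S (\<lambda>x. (poly (residual_poly x) a)\<^sup>2)"
    by (simp add: Lim_residual)
  also have "\<dots> \<le> integral (S \<times> {a<..<b}) (\<lambda>z. c * (poly (w_poly (fst z)) (snd z))\<^sup>2)"
  proof (rule integral_le_integral_Times_Ioo_slices[OF compact_C S])
    show "continuous_on C (\<lambda>x. (poly (residual_poly x) a)\<^sup>2)"
      unfolding residual_poly_sum by (simp add: poly_sum) (intro continuous_intros V_cont, simp)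
    show "continuous_on (C \<times> {a..b}) (\<lambda>z. c * (poly (w_poly (fst z)) (snd z))\<^sup>2)"
      by (intro continuous_intros continuous_on_w_poly)
  qed (use residual_poly_trace_le in \<open>simp add: integral_Ioo_poly_square c_def\<close>)
  also have "\<dots> = c * integral (S \<times> {a<..<b}) (\<lambda>(x, s). (w x s)\<^sup>2)"
    by (subst integral_mult_right[symmetric], intro integral_cong) (auto simp: w_eq_w_poly)
  finally show ?thesis
    by (simp only: c_def)
qed

end

lemma simplicial_mesh_sets:
  assumes "simplicial_mesh \<Omega> Th"
  shows "compact (closure \<Omega>)" and "\<Omega> \<in> sets borel"
    and "K \<in> Th \<Longrightarrow> K \<subseteq> closure \<Omega>" and "K \<in> Th \<Longrightarrow> K \<in> sets borel"
proof -
  have mesh: "open \<Omega>" "bounded \<Omega>" "\<Union>Th = closure \<Omega>" "\<And>K. K \<in> Th \<Longrightarrow> int CARD('a) simplex K"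
    using assms by (simp_all add: simplicial_mesh_def)
  then show "compact (closure \<Omega>)" "\<Omega> \<in> sets borel" "K \<in> Th \<Longrightarrow> K \<subseteq> closure \<Omega>"
    by (auto simp: compact_closure)
  assume "K \<in> Th"
  then obtain C where "finite C" "K = convex hull C"
    using mesh(4) unfolding simplex by blast
  then show "K \<in> sets borel"
    by (simp add: borel_closed compact_imp_closed compact_convex_hull finite_imp_compact)
qed

lemma Wh_slab_coefficients:
  assumes "w \<in> Wh \<Omega> Th p q t N" "m \<in> {1..N}"
  obtains V where "\<And>j. j < q \<Longrightarrow> continuous_on (closure \<Omega>) (V j)"
    and "\<And>x s. s \<in> {t (m - 1)<..<t m} \<Longrightarrow> w x s = (\<Sum>j<q. V j x * s ^ j)"
proof -
  have "\<exists>V. (\<forall>j<q. V j \<in> Vh \<Omega> Th p) \<and> (\<forall>x. \<forall>s\<in>{t (m - 1)<..<t m}. w x s = (\<Sum>j<q. V j x * s ^ j))"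
    using assms(1)[unfolded Wh_def mem_Collect_eq] assms(2) by (rule bspec)
  then obtain V where V: "\<And>j. j < q \<Longrightarrow> V j \<in> Vh \<Omega> Th p"
    and wV: "\<And>x s. s \<in> {t (m - 1)<..<t m} \<Longrightarrow> w x s = (\<Sum>j<q. V j x * s ^ j)"
    by blast
  have "continuous_on (closure \<Omega>) (V j)" if "j < q" for j
    using V[OF that] unfolding Vh_def by blast
  with wV show ?thesis
    using that by blast
qed

lemma sqrt_le_mult_sqrt:
  fixes X Y c d :: real
  assumes "X \<le> c\<^sup>2 * Y" "0 \<le> c" "c \<le> d" "0 \<le> Y"
  shows "sqrt X \<le> d * sqrt Y"
proof -
  have "sqrt X \<le> c * sqrt Y"
    using real_sqrt_le_mono[OF assms(1)] assms(2) by (simp add: real_sqrt_mult)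
  also have "\<dots> \<le> d * sqrt Y"
    using assms(3,4) by (simp add: mult_right_mono)
  finally show ?thesis .
qed

lemma stability_constants:
  fixes u \<tau> :: real
  assumes "0 < u" "0 < \<tau>"
  shows "u * (1 / (4 * u) / \<tau>)\<^sup>2 * \<tau> / 4 = (1 / (8 * sqrt u * sqrt \<tau>))\<^sup>2"
    and "1 / (8 * sqrt u * sqrt \<tau>) \<le> 1 / (4 * sqrt u * sqrt \<tau>)"
    and "1 / (4 * sqrt u * sqrt \<tau>) = sqrt (1 / (4 * u) / \<tau>) / 2"
proof -
  have "(1 / (8 * sqrt u * sqrt \<tau>))\<^sup>2 = 1 / (64 * u * \<tau>)"
    using assms by (simp add: power_divide power_mult_distrib real_sqrt_pow2)
  moreover have "u * (1 / (4 * u) / \<tau>)\<^sup>2 * \<tau> / 4 = 1 / (64 * u * \<tau>)"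
    using assms by (simp add: power2_eq_square)
  ultimately show "u * (1 / (4 * u) / \<tau>)\<^sup>2 * \<tau> / 4 = (1 / (8 * sqrt u * sqrt \<tau>))\<^sup>2"
    by simp
  show "1 / (8 * sqrt u * sqrt \<tau>) \<le> 1 / (4 * sqrt u * sqrt \<tau>)"
    using assms by (intro frac_le) auto
  show "1 / (4 * sqrt u * sqrt \<tau>) = sqrt (1 / (4 * u) / \<tau>) / 2"
    by (simp add: real_sqrt_divide real_sqrt_mult)
qed

theorem mainTheorem3:
  fixes \<Omega> :: "(real^'d) set" and Th :: "(real^'d) set set"
    and t :: "nat \<Rightarrow> real" and T \<theta> :: real and N n p q :: nat
    and w :: "real^'d \<Rightarrow> real \<Rightarrow> real"
  assumes mesh: "simplicial_mesh \<Omega> Th"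
    and N: "N \<ge> 1" and t0: "t 0 = 0" and tN: "t N = T"
    and tmono: "\<And>m. m < N \<Longrightarrow> t m < t (Suc m)"
    and q: "q \<ge> 1" and n: "n \<in> {1..N}"
    and w: "w \<in> Wh \<Omega> Th p q t N"
  defines "\<phi> \<equiv> (\<lambda>s. \<theta> - ((1 / (4 * (2 * real q + 1))) / (t n - t (n - 1))) * (s - t (n - 1)))"
  defines "r \<equiv> (\<lambda>x s. \<phi> s * w x s - poly (proj_t (t (n - 1)) (t n) q (\<lambda>s'. \<phi> s' * w x s')) s)"
  shows "(\<forall>K\<in>Th.
           sqrt (integral (K \<times> {t (n - 1)<..<t n}) (\<lambda>(x, s). (r x s)\<^sup>2))
             \<le> (1 / (4 * (2 * real q + 1))) * sqrt (integral (K \<times> {t (n - 1)<..<t n}) (\<lambda>(x, s). (w x s)\<^sup>2)))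
       \<and> sqrt (integral \<Omega> (\<lambda>x. (Lim (at_right (t (n - 1))) (r x))\<^sup>2))
             \<le> 1 / (4 * sqrt (2 * real q + 1) * sqrt (t n - t (n - 1)))
                 * sqrt (integral (\<Omega> \<times> {t (n - 1)<..<t n}) (\<lambda>(x, s). (w x s)\<^sup>2))
       \<and> 1 / (4 * sqrt (2 * real q + 1) * sqrt (t n - t (n - 1)))
                 * sqrt (integral (\<Omega> \<times> {t (n - 1)<..<t n}) (\<lambda>(x, s). (w x s)\<^sup>2))
           = sqrt ((1 / (4 * (2 * real q + 1))) / (t n - t (n - 1))) / 2 * sqrt (integral (\<Omega> \<times> {t (n - 1)<..<t n}) (\<lambda>(x, s). (w x s)\<^sup>2))"
proof -
  define a b \<zeta> where "a = t (n - 1)" and "b = t n" and "\<zeta> = 1 / (4 * (2 * real q + 1))"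
  have ab: "a < b"
    using tmono[of "n - 1"] n by (auto simp: a_def b_def)
  obtain V where "\<And>j. j < q \<Longrightarrow> continuous_on (closure \<Omega>) (V j)"
    and "\<And>x s. s \<in> {a<..<b} \<Longrightarrow> w x s = (\<Sum>j<q. V j x * s ^ j)"
    using Wh_slab_coefficients[OF w n] unfolding a_def b_def by blast
  then interpret S: time_slab a b "closure \<Omega>" q V w \<theta> "\<zeta> / (b - a)"
    using ab q simplicial_mesh_sets(1)[OF mesh] by unfold_locales auto
  have r_eq: "r = S.residual"
    unfolding S.residual_def[abs_def] S.weight_def[abs_def]
    unfolding r_def \<phi>_def a_def b_def \<zeta>_def ..
  have "0 < \<zeta>"
    by (simp add: \<zeta>_def)
  have constants: "(2 * real q + 1) * (1 / (4 * (2 * real q + 1)) / (b - a))\<^sup>2 * (b - a) / 4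
      = (1 / (8 * sqrt (2 * real q + 1) * sqrt (b - a)))\<^sup>2"
    "1 / (8 * sqrt (2 * real q + 1) * sqrt (b - a)) \<le> 1 / (4 * sqrt (2 * real q + 1) * sqrt (b - a))"
    "1 / (4 * sqrt (2 * real q + 1) * sqrt (b - a)) = sqrt (1 / (4 * (2 * real q + 1)) / (b - a)) / 2"
    using ab by (intro stability_constants; simp)+
  have W_nonneg: "0 \<le> integral (X \<times> {a<..<b}) (\<lambda>(x, s). (w x s)\<^sup>2)" for X
    by (rule integral_nonneg_unconditional) (simp add: case_prod_beta)
  have "integral (K \<times> {a<..<b}) (\<lambda>(x, s). (r x s)\<^sup>2)
      \<le> (\<zeta> / 2)\<^sup>2 * integral (K \<times> {a<..<b}) (\<lambda>(x, s). (w x s)\<^sup>2)" if "K \<in> Th" for K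
    using S.residual_L2_bound simplicial_mesh_sets(3,4)[OF mesh that] ab
    by (simp add: r_eq power_divide)
  then have "\<forall>K\<in>Th. sqrt (integral (K \<times> {a<..<b}) (\<lambda>(x, s). (r x s)\<^sup>2))
      \<le> \<zeta> * sqrt (integral (K \<times> {a<..<b}) (\<lambda>(x, s). (w x s)\<^sup>2))"
    using W_nonneg \<open>0 < \<zeta>\<close> by (intro ballI sqrt_le_mult_sqrt[of _ "\<zeta> / 2"]) auto
  moreover have "integral \<Omega> (\<lambda>x. (Lim (at_right a) (r x))\<^sup>2)
      \<le> (1 / (8 * sqrt (2 * real q + 1) * sqrt (b - a)))\<^sup>2 * integral (\<Omega> \<times> {a<..<b}) (\<lambda>(x, s). (w x s)\<^sup>2)"
    using S.residual_trace_bound[OF closure_subset simplicial_mesh_sets(2)[OF mesh]]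
    unfolding r_eq \<zeta>_def constants(1) .
  then have "sqrt (integral \<Omega> (\<lambda>x. (Lim (at_right a) (r x))\<^sup>2))
      \<le> 1 / (4 * sqrt (2 * real q + 1) * sqrt (b - a)) * sqrt (integral (\<Omega> \<times> {a<..<b}) (\<lambda>(x, s). (w x s)\<^sup>2))"
    by (rule sqrt_le_mult_sqrt) (use W_nonneg constants(2) ab in auto)
  moreover have "1 / (4 * sqrt (2 * real q + 1) * sqrt (b - a)) * sqrt (integral (\<Omega> \<times> {a<..<b}) (\<lambda>(x, s). (w x s)\<^sup>2))
      = sqrt (\<zeta> / (b - a)) / 2 * sqrt (integral (\<Omega> \<times> {a<..<b}) (\<lambda>(x, s). (w x s)\<^sup>2))"
    unfolding \<zeta>_def constants(3) ..
  ultimately show ?thesis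
    unfolding a_def b_def \<zeta>_def by blast
qed

end
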